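(* Fix integers $0\le d\le m$, $\delta\in(0,1)$, $\chi>0$. There is $\varepsilon_0>0$ such that for all $0<\varepsilon<\varepsilon_0$: let $r>0$ with $2r^\delta<\varepsilon$, let $0<\eta\le p\le r/2$, $0<\widetilde\eta\le\widetilde p$ with $\widetilde p\le e^\varepsilon p$ and $e^{-\varepsilon}\le\widetilde\eta/\eta\le e^{\varepsilon}$, let $\widetilde q$ satisfy $\widetilde\eta\le\widetilde q\le r/2$, and let $F=D+H:B^m[r]\to\mathbb R^m$ satisfy (GT2)–(GT3). Then for every $V^u\in\mathscr M^u_{p,\eta}$ and every $V^s\in\mathscr M^s_{\widetilde q,\widetilde\eta}$, the intersection $F(V^u)\cap V^s$ consists of exactly one point.
   Context: $\|\cdot\|$ Euclidean; $B^n[r]$ balls at $0$; ${\rm Hol}_\delta(h)=\sup_{x\ne y}\|h(x)-h(y)\|/\|x-y\|^\delta$; $\|h\|_{C^0}=\sup\|h\|$. $\mathbb R^m=\mathbb R^d\times\mathbb R^{m-d}$. $\mathscr M^u_{p,\eta}$: graphs $\{(v,G(v)):v\in B^d[p]\}$; $\mathscr M^s_{q,\eta}$: graphs $\{(J(w),w):w\in B^{m-d}[q]\}$; the $C^{1+\delta}$ representing functions satisfy (AM1) value at $0$ of norm $\le10^{-3}\eta$, (AM2) derivative at $0$ of norm $\le\frac12\eta^\delta$, (AM3) $\|d\cdot\|_{C^0}+{\rm Hol}_\delta(d\cdot)\le\frac12$. (GT2): $D={\rm diag}(D_1,D_2)$ with $D_1$ on $\mathbb R^d$, $D_2$ on $\mathbb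 R^{m-d}$ invertible linear, $\|D_1^{-1}\|<e^{-\chi}$, $\|D_2\|<e^{-\chi}$. (GT3): $H:B^m[r]\to\mathbb R^m$ is $C^{1+\delta}$ with $\|H(0)\|<\varepsilon\eta$, $\|dH\|_{C^0(B^m[t])}<\varepsilon t^\delta$ for all $t\in[\eta,2p]$, ${\rm Hol}_\delta(dH)<\varepsilon$. *)

theory Defs
  imports "HOL-Analysis.Analysis"
begin

text \<open>Hoelder constant of exponent delta of h on the set S (sup over distinct pairs; 0 included
  so that the supremum is of a nonempty set).\<close>
definition hol :: "real \<Rightarrow> ('a::real_normed_vector \<Rightarrow> 'b::real_normed_vector) \<Rightarrow> 'a set \<Rightarrow> real" where
  "hol \<delta> h S = Sup (insert 0 {norm (h x - h y) / (norm (x - y) powr \<delta>) | x y. x \<in> S \<and> y \<in> S \<and> x \<noteq> y})"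

definition c0norm :: "('a \<Rightarrow> 'b::real_normed_vector) \<Rightarrow> 'a set \<Rightarrow> real" where
  "c0norm h S = Sup (insert 0 ((\<lambda>x. norm (h x)) ` S))"

definition C1hol :: "real \<Rightarrow> 'a set \<Rightarrow> ('a::real_normed_vector \<Rightarrow> 'b::real_normed_vector)
    \<Rightarrow> ('a \<Rightarrow> 'a \<Rightarrow>\<^sub>L 'b) \<Rightarrow> bool" where
  "C1hol \<delta> S G dG \<longleftrightarrow>
     (\<forall>x\<in>S. (G has_derivative blinfun_apply (dG x)) (at x within S)) \<and>
     (\<exists>C. \<forall>x\<in>S. \<forall>y\<in>S. norm (dG x - dG y) \<le> C * norm (x - y) powr \<delta>)"

definition admissible :: "real \<Rightarrow> real \<Rightarrow> real \<Rightarrow> ('a::euclidean_space \<Rightarrow> 'b::euclidean_space) \<Rightarrow> bool" where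
  "admissible \<delta> p \<eta> G \<longleftrightarrow> (\<exists>dG. C1hol \<delta> (cball 0 p) G dG \<and>
     norm (G 0) \<le> 10 powr (-3) * \<eta> \<and>
     norm (dG 0) \<le> 1/2 * \<eta> powr \<delta> \<and>
     c0norm dG (cball 0 p) + hol \<delta> dG (cball 0 p) \<le> 1/2)"

text \<open>R^m = R^d x R^(m-d) is modelled as 'a \<times> 'b.\<close>
definition Mu :: "real \<Rightarrow> real \<Rightarrow> real \<Rightarrow> ('a::euclidean_space \<times> 'b::euclidean_space) set set" where
  "Mu \<delta> p \<eta> = {V. \<exists>G::'a \<Rightarrow> 'b. admissible \<delta> p \<eta> G \<and> V = {(v, G v) | v. v \<in> cball 0 p}}"

definition Ms :: "real \<Rightarrow> real \<Rightarrow> real \<Rightarrow> ('a::euclidean_space \<times> 'b::euclidean_space) set set" where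
  "Ms \<delta> q \<eta> = {V. \<exists>J::'b \<Rightarrow> 'a. admissible \<delta> q \<eta> J \<and> V = {(J w, w) | w. w \<in> cball 0 q}}"

definition GT2 :: "real \<Rightarrow> ('a::euclidean_space \<Rightarrow>\<^sub>L 'a) \<Rightarrow> ('b::euclidean_space \<Rightarrow>\<^sub>L 'b) \<Rightarrow> bool" where
  "GT2 chi D1 D2 \<longleftrightarrow>
     (\<exists>D1i. D1i o\<^sub>L D1 = id_blinfun \<and> D1 o\<^sub>L D1i = id_blinfun \<and> norm D1i < exp (-chi)) \<and>
     (\<exists>D2i. D2i o\<^sub>L D2 = id_blinfun \<and> D2 o\<^sub>L D2i = id_blinfun) \<and> norm D2 < exp (-chi)"

definition GT3 :: "real \<Rightarrow> real \<Rightarrow> real \<Rightarrow> real \<Rightarrow> real \<Rightarrow> ('c::euclidean_space \<Rightarrow> 'c) \<Rightarrow> bool" where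
  "GT3 \<delta> \<epsilon> r \<eta> p H \<longleftrightarrow> (\<exists>dH. C1hol \<delta> (cball 0 r) H dH \<and>
     norm (H 0) < \<epsilon> * \<eta> \<and>
     (\<forall>t. \<eta> \<le> t \<and> t \<le> 2 * p \<longrightarrow> c0norm dH (cball 0 t) < \<epsilon> * t powr \<delta>) \<and>
     hol \<delta> dH (cball 0 r) < \<epsilon>)"

definition diagF :: "('a::real_normed_vector \<Rightarrow>\<^sub>L 'a) \<Rightarrow> ('b::real_normed_vector \<Rightarrow>\<^sub>L 'b)
    \<Rightarrow> ('a \<times> 'b \<Rightarrow> 'a \<times> 'b) \<Rightarrow> 'a \<times> 'b \<Rightarrow> 'a \<times> 'b" where
  "diagF D1 D2 H x = (D1 (fst x), D2 (snd x)) + H x"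

end

theory Submission
  imports Defs
begin

(*
  Write F = diagF D1 D2 H. The point F (v, G v) lies on the graph of J exactly when
  w = \<Phi> v := D2 (G v) + snd (H (v, G v)) and v is a fixed point of
  T v := D1i (J (\<Phi> v) - fst (H (v, G v))), where D1i is the inverse of D1.
  Admissible graphs are 1/2-Lipschitz, (GT3) with r\<^sup>\<delta> \<le> 1 makes H \<epsilon>-Lipschitz on B[2p], and
  by (GT2) both D1i and D2 are contractions; hence T is a 1/2-contraction wherever \<Phi> lands
  in B[q'], and for \<epsilon> < 1/10 it maps B[\<eta>] into itself. Banach's fixed point theorem gives the
  intersection point, and the contraction estimate makes it unique among all v \<in> B[p].
*)

lemma holder_bounded_image:
  fixes h :: "'a::real_normed_vector \<Rightarrow> 'b::real_normed_vector"
  assumes holder: "\<forall>x\<in>S. \<forall>y\<in>S. norm (h x - h y) \<le> C * norm (x - y) powr \<delta>"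
    and "bounded S" "0 \<le> \<delta>"
  shows "bounded (h ` S)"
proof (cases "S = {}")
  case False
  then obtain a where a: "a \<in> S" by blast
  obtain R where R: "\<And>x. x \<in> S \<Longrightarrow> norm x \<le> R"
    using \<open>bounded S\<close> by (auto simp: bounded_iff)
  have "norm (h x) \<le> norm (h a) + \<bar>C\<bar> * (2 * R) powr \<delta>" if x: "x \<in> S" for x
  proof -
    have "norm (x - a) \<le> 2 * R"
      using R[OF x] R[OF a] norm_triangle_ineq4[of x a] by linarith
    then have dist_bound: "norm (x - a) powr \<delta> \<le> (2 * R) powr \<delta>"
      using \<open>0 \<le> \<delta>\<close> by (simp add: powr_mono2)
    have "norm (h x - h a) \<le> C * norm (x - a) powr \<delta>"
      using holder x a by blast
    also have "\<dots> \<le> \<bar>C\<bar> * norm (x - a) powr \<delta>"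
      by (simp add: mult_right_mono)
    also have "\<dots> \<le> \<bar>C\<bar> * (2 * R) powr \<delta>"
      using dist_bound by (simp add: mult_left_mono)
    finally show ?thesis
      using norm_triangle_sub[of "h x" "h a"] by linarith
  qed
  then show ?thesis
    unfolding bounded_iff by blast
qed simp

lemma hol_nonneg:
  assumes "\<forall>x\<in>S. \<forall>y\<in>S. norm (h x - h y) \<le> C * norm (x - y) powr \<delta>"
  shows "0 \<le> hol \<delta> h S"
proof -
  have "bdd_above (insert 0 {norm (h x - h y) / norm (x - y) powr \<delta> | x y. x \<in> S \<and> y \<in> S \<and> x \<noteq> y})"
  proof (rule bdd_aboveI[of _ "max 0 C"])
    fix z assume "z \<in> insert 0 {norm (h x - h y) / norm (x - y) powr \<delta> | x y. x \<in> S \<and> y \<in> S \<and> x \<noteq> y}"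
    then consider "z = 0" | x y where "x \<in> S" "y \<in> S" "x \<noteq> y" "z = norm (h x - h y) / norm (x - y) powr \<delta>"
      by blast
    then show "z \<le> max 0 C"
    proof cases
      case 2
      then have "z \<le> C"
        using assms by (simp add: divide_le_eq)
      then show ?thesis
        by simp
    qed simp
  qed
  then show ?thesis
    unfolding hol_def by (rule cSup_upper[rotated]) simp
qed

lemma norm_le_c0norm:
  assumes "bounded (h ` S)" "x \<in> S"
  shows "norm (h x) \<le> c0norm h S"
proof -
  obtain B where "\<forall>y\<in>S. norm (h y) \<le> B"
    using assms(1) by (auto simp: bounded_iff)
  then have "bdd_above (insert 0 ((\<lambda>y. norm (h y)) ` S))"
    by (intro bdd_aboveI[of _ "max 0 B"]) auto
  then show ?thesis
    unfolding c0norm_def using assms(2) by (intro cSup_upper) auto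
qed

lemma C1hol_subset: "C1hol \<delta> S G dG \<Longrightarrow> T \<subseteq> S \<Longrightarrow> C1hol \<delta> T G dG"
  unfolding C1hol_def by (meson has_derivative_subset subsetD)

lemma C1hol_hol_nonneg: "C1hol \<delta> S G dG \<Longrightarrow> 0 \<le> hol \<delta> dG S"
  unfolding C1hol_def by (elim conjE exE) (rule hol_nonneg)

lemma C1hol_norm_le_c0norm:
  "C1hol \<delta> S G dG \<Longrightarrow> bounded S \<Longrightarrow> 0 \<le> \<delta> \<Longrightarrow> x \<in> S \<Longrightarrow> norm (dG x) \<le> c0norm dG S"
  unfolding C1hol_def by (elim conjE exE) (blast intro: norm_le_c0norm holder_bounded_image)

lemma C1hol_lipschitz:
  assumes "C1hol \<delta> S G dG" "convex S" "\<And>z. z \<in> S \<Longrightarrow> norm (dG z) \<le> L" "x \<in> S" "y \<in> S"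
  shows "norm (G x - G y) \<le> L * norm (x - y)"
proof (rule differentiable_bound[OF assms(2) _ _ assms(4,5)])
  show "\<And>z. z \<in> S \<Longrightarrow> (G has_derivative blinfun_apply (dG z)) (at z within S)"
    using assms(1) unfolding C1hol_def by blast
  show "\<And>z. z \<in> S \<Longrightarrow> onorm (blinfun_apply (dG z)) \<le> L"
    using assms(3) by (simp add: norm_blinfun.rep_eq)
qed

lemma admissible_norm_at_0: "admissible \<delta> p \<eta> G \<Longrightarrow> norm (G 0) \<le> \<eta> / 1000"
  unfolding admissible_def by (auto simp: powr_minus powr_realpow)

lemma admissible_lipschitz:
  assumes "admissible \<delta> p \<eta> G" "0 \<le> \<delta>" "x \<in> cball 0 p" "y \<in> cball 0 p"
  shows "norm (G x - G y) \<le> 1/2 * norm (x - y)"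
proof -
  obtain dG where C1: "C1hol \<delta> (cball 0 p) G dG"
    and small: "c0norm dG (cball 0 p) + hol \<delta> dG (cball 0 p) \<le> 1/2"
    using assms(1) unfolding admissible_def by blast
  have "norm (dG z) \<le> 1/2" if "z \<in> cball 0 p" for z
    using C1hol_norm_le_c0norm[OF C1 bounded_cball assms(2) that] C1hol_hol_nonneg[OF C1] small
    by linarith
  then show ?thesis
    using C1hol_lipschitz[OF C1 convex_cball _ assms(3,4)] by blast
qed

lemma GT3_norm_at_0: "GT3 \<delta> \<epsilon> r \<eta> p H \<Longrightarrow> norm (H 0) < \<epsilon> * \<eta>"
  unfolding GT3_def by blast

lemma GT3_lipschitz:
  assumes "GT3 \<delta> \<epsilon> r \<eta> p H" "0 \<le> \<delta>" "0 < \<eta>" "\<eta> \<le> p" "2 * p \<le> r" "r powr \<delta> \<le> 1"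
    and "x \<in> cball 0 (2 * p)" "y \<in> cball 0 (2 * p)"
  shows "norm (H x - H y) \<le> \<epsilon> * norm (x - y)"
proof -
  obtain dH where C1_r: "C1hol \<delta> (cball 0 r) H dH"
    and c0_bound: "\<forall>t. \<eta> \<le> t \<and> t \<le> 2 * p \<longrightarrow> c0norm dH (cball 0 t) < \<epsilon> * t powr \<delta>"
    using assms(1) unfolding GT3_def by blast
  have C1: "C1hol \<delta> (cball 0 (2 * p)) H dH"
    using C1hol_subset[OF C1_r subset_cball[OF assms(5)]] .
  have c0: "c0norm dH (cball 0 (2 * p)) < \<epsilon> * (2 * p) powr \<delta>"
    using c0_bound assms(3,4) by simp
  have "(2 * p) powr \<delta> \<le> r powr \<delta>"
    using assms(3-5) by (intro powr_mono2[OF assms(2)]) linarith+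
  then have small_radius: "(2 * p) powr \<delta> \<le> 1"
    using assms(6) by linarith
  have "norm (dH z) \<le> \<epsilon>" if z: "z \<in> cball 0 (2 * p)" for z
  proof -
    have dH_le: "norm (dH z) \<le> c0norm dH (cball 0 (2 * p))"
      using C1hol_norm_le_c0norm[OF C1 bounded_cball assms(2) z] .
    then have "0 < \<epsilon> * (2 * p) powr \<delta>"
      using c0 norm_ge_zero[of "dH z"] by linarith
    then have "0 < \<epsilon>"
      by (simp add: zero_less_mult_iff)
    then have "\<epsilon> * (2 * p) powr \<delta> \<le> \<epsilon>"
      using small_radius by (simp add: mult_left_le)
    then show ?thesis
      using dH_le c0 by linarith
  qed
  then show ?thesis
    using C1hol_lipschitz[OF C1 convex_cball _ assms(7,8)] by blast
qed

lemma GT2_inverse_contractions: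
  fixes D1 :: "'a::euclidean_space \<Rightarrow>\<^sub>L 'a" and D2 :: "'b::euclidean_space \<Rightarrow>\<^sub>L 'b"
  assumes "GT2 chi D1 D2" "0 \<le> chi"
  obtains D1i :: "'a \<Rightarrow>\<^sub>L 'a" where "\<And>x. D1i (D1 x) = x" "\<And>x. D1 (D1i x) = x"
    "\<And>x. norm (D1i x) \<le> norm x" "\<And>y. norm (D2 y) \<le> norm y"
proof -
  obtain D1i where inv: "D1i o\<^sub>L D1 = id_blinfun" "D1 o\<^sub>L D1i = id_blinfun"
    and norm_D1i: "norm D1i < exp (- chi)" and norm_D2: "norm D2 < exp (- chi)"
    using assms(1) unfolding GT2_def by blast
  have "exp (- chi) \<le> 1"
    using assms(2) by simp
  have contraction: "norm (L x) \<le> norm x" if "norm L < exp (- chi)" for L :: "'c::real_normed_vector \<Rightarrow>\<^sub>L 'c" and x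
    using norm_blinfun[of L x] mult_right_mono[of "norm L" 1 "norm x"] that \<open>exp (- chi) \<le> 1\<close>
    by simp
  show ?thesis
  proof
    show "D1i (D1 x) = x" "D1 (D1i x) = x" for x
      using inv by (metis blinfun_apply_blinfun_compose blinfun_apply_id_blinfun)+
  qed (use contraction norm_D1i norm_D2 in auto)
qed

lemma norm_fst_le_norm: "norm (fst z) \<le> norm z"
  using norm_fst_le[of "fst z" "snd z"] by simp

lemma norm_snd_le_norm: "norm (snd z) \<le> norm z"
  using norm_snd_le[of "snd z" "fst z"] by simp

locale graph_transversality =
  fixes D1 D1i :: "'a::banach \<Rightarrow>\<^sub>L 'a" and D2 :: "'b::real_normed_vector \<Rightarrow>\<^sub>L 'b"
    and H :: "'a \<times> 'b \<Rightarrow> 'a \<times> 'b" and G :: "'a \<Rightarrow> 'b" and J :: "'b \<Rightarrow> 'a"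
    and \<epsilon> \<eta> p q :: real
  assumes D1i_D1: "\<And>x. D1i (D1 x) = x" and D1_D1i: "\<And>x. D1 (D1i x) = x"
    and norm_D1i: "\<And>x. norm (D1i x) \<le> norm x" and norm_D2: "\<And>y. norm (D2 y) \<le> norm y"
    and G_0: "norm (G 0) \<le> \<eta> / 1000"
    and G_lipschitz: "\<And>x y. x \<in> cball 0 p \<Longrightarrow> y \<in> cball 0 p \<Longrightarrow> norm (G x - G y) \<le> 1/2 * norm (x - y)"
    and J_0: "norm (J 0) \<le> \<eta> / 100"
    and J_lipschitz: "\<And>x y. x \<in> cball 0 q \<Longrightarrow> y \<in> cball 0 q \<Longrightarrow> norm (J x - J y) \<le> 1/2 * norm (x - y)"
    and H_0: "norm (H 0) \<le> \<epsilon> * \<eta>"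
    and H_lipschitz: "\<And>x y. x \<in> cball 0 (2 * p) \<Longrightarrow> y \<in> cball 0 (2 * p) \<Longrightarrow> norm (H x - H y) \<le> \<epsilon> * norm (x - y)"
    and \<epsilon>: "0 \<le> \<epsilon>" "\<epsilon> \<le> 1/10"
    and \<eta>: "0 \<le> \<eta>" "\<eta> \<le> p" "9/10 * \<eta> \<le> q"
begin

definition \<Phi> :: "'a \<Rightarrow> 'b" where
  "\<Phi> v = D2 (G v) + snd (H (v, G v))"

definition T :: "'a \<Rightarrow> 'a" where
  "T v = D1i (J (\<Phi> v) - fst (H (v, G v)))"

lemma diagF_graph: "diagF D1 D2 H (v, G v) = (D1 v + fst (H (v, G v)), \<Phi> v)"
  unfolding diagF_def \<Phi>_def by (simp add: plus_prod_def)

lemma diagF_graph_eq_iff: "diagF D1 D2 H (v, G v) = (J w, w) \<longleftrightarrow> w = \<Phi> v \<and> T v = v"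
proof
  assume "diagF D1 D2 H (v, G v) = (J w, w)"
  then have "w = \<Phi> v" "J (\<Phi> v) = D1 v + fst (H (v, G v))"
    unfolding diagF_graph by auto
  then show "w = \<Phi> v \<and> T v = v"
    unfolding T_def by (simp add: D1i_D1)
next
  assume fixed: "w = \<Phi> v \<and> T v = v"
  then have "D1 v = J (\<Phi> v) - fst (H (v, G v))"
    using D1_D1i[of "J (\<Phi> v) - fst (H (v, G v))"] unfolding T_def by simp
  then show "diagF D1 D2 H (v, G v) = (J w, w)"
    unfolding diagF_graph using fixed by simp
qed

lemma norm_G_le: "v \<in> cball 0 p \<Longrightarrow> norm (G v) \<le> \<eta> / 1000 + norm v / 2"
  using G_lipschitz[of v 0] G_0 norm_triangle_sub[of "G v" "G 0"] \<eta> by simp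

lemma graph_in_cball: "v \<in> cball 0 p \<Longrightarrow> (v, G v) \<in> cball 0 (2 * p)"
  using norm_G_le[of v] norm_Pair_le[of v "G v"] \<eta> by simp

lemma H_graph_lipschitz:
  assumes "v1 \<in> cball 0 p" "v2 \<in> cball 0 p"
  shows "norm (H (v1, G v1) - H (v2, G v2)) \<le> 3/2 * \<epsilon> * norm (v1 - v2)"
proof -
  have "norm ((v1, G v1) - (v2, G v2)) \<le> norm (v1 - v2) + norm (G v1 - G v2)"
    using norm_Pair_le[of "v1 - v2" "G v1 - G v2"] by simp
  also have "\<dots> \<le> 3/2 * norm (v1 - v2)"
    using G_lipschitz[OF assms] by simp
  finally have "\<epsilon> * norm ((v1, G v1) - (v2, G v2)) \<le> \<epsilon> * (3/2 * norm (v1 - v2))"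
    using \<epsilon> by (intro mult_left_mono)
  then show ?thesis
    using H_lipschitz[OF graph_in_cball[OF assms(1)] graph_in_cball[OF assms(2)]] by simp
qed

lemma \<Phi>_lipschitz:
  assumes "v1 \<in> cball 0 p" "v2 \<in> cball 0 p"
  shows "norm (\<Phi> v1 - \<Phi> v2) \<le> (1/2 + 3/2 * \<epsilon>) * norm (v1 - v2)"
proof -
  have "\<Phi> v1 - \<Phi> v2 = D2 (G v1 - G v2) + snd (H (v1, G v1) - H (v2, G v2))"
    unfolding \<Phi>_def by (simp add: blinfun.diff_right)
  then have "norm (\<Phi> v1 - \<Phi> v2) \<le> norm (D2 (G v1 - G v2)) + norm (snd (H (v1, G v1) - H (v2, G v2)))"
    by (simp add: norm_triangle_ineq)
  also have "\<dots> \<le> norm (G v1 - G v2) + norm (H (v1, G v1) - H (v2, G v2))"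
    using norm_D2 norm_snd_le_norm by (rule add_mono)
  finally show ?thesis
    using G_lipschitz[OF assms] H_graph_lipschitz[OF assms] by (simp add: algebra_simps)
qed

lemma T_contraction:
  assumes "v1 \<in> cball 0 p" "v2 \<in> cball 0 p" "\<Phi> v1 \<in> cball 0 q" "\<Phi> v2 \<in> cball 0 q"
  shows "norm (T v1 - T v2) \<le> 1/2 * norm (v1 - v2)"
proof -
  have "T v1 - T v2 = D1i ((J (\<Phi> v1) - J (\<Phi> v2)) - fst (H (v1, G v1) - H (v2, G v2)))"
    unfolding T_def by (simp add: blinfun.diff_right blinfun.add_right algebra_simps)
  then have "norm (T v1 - T v2) \<le> norm ((J (\<Phi> v1) - J (\<Phi> v2)) - fst (H (v1, G v1) - H (v2, G v2)))"
    using norm_D1i by metis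
  also have "\<dots> \<le> norm (J (\<Phi> v1) - J (\<Phi> v2)) + norm (fst (H (v1, G v1) - H (v2, G v2)))"
    by (rule norm_triangle_ineq4)
  also have "\<dots> \<le> norm (J (\<Phi> v1) - J (\<Phi> v2)) + norm (H (v1, G v1) - H (v2, G v2))"
    by (rule add_left_mono[OF norm_fst_le_norm])
  also have "\<dots> \<le> 1/2 * ((1/2 + 3/2 * \<epsilon>) * norm (v1 - v2)) + 3/2 * \<epsilon> * norm (v1 - v2)"
    using J_lipschitz[OF assms(3,4)] \<Phi>_lipschitz[OF assms(1,2)] H_graph_lipschitz[OF assms(1,2)]
    by linarith
  also have "\<dots> \<le> 1/2 * norm (v1 - v2)"
  proof -
    have "\<epsilon> * norm (v1 - v2) \<le> 1/10 * norm (v1 - v2)"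
      using \<epsilon> by (intro mult_right_mono) auto
    moreover have "1/2 * ((1/2 + 3/2 * \<epsilon>) * norm (v1 - v2)) + 3/2 * \<epsilon> * norm (v1 - v2)
        = 1/4 * norm (v1 - v2) + 9/4 * (\<epsilon> * norm (v1 - v2))"
      by (simp add: algebra_simps)
    ultimately show ?thesis
      using norm_ge_zero[of "v1 - v2"] by linarith
  qed
  finally show ?thesis .
qed

lemma norm_graph_small:
  assumes "v \<in> cball 0 \<eta>"
  shows "norm (G v) \<le> 3/5 * \<eta>" "norm (H (v, G v)) \<le> 3/10 * \<eta>"
proof -
  have v: "v \<in> cball 0 p" "norm v \<le> \<eta>"
    using assms \<eta> by auto
  show G_small: "norm (G v) \<le> 3/5 * \<eta>"
    using norm_G_le[OF v(1)] v(2) \<eta> by simp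
  have "norm (H (v, G v) - H 0) \<le> \<epsilon> * norm (v, G v)"
    using H_lipschitz[OF graph_in_cball[OF v(1)], of 0] \<eta> by simp
  also have "\<dots> \<le> \<epsilon> * (8/5 * \<eta>)"
    using norm_Pair_le[of v "G v"] G_small v(2) \<epsilon> by (intro mult_left_mono) auto
  finally have "norm (H (v, G v)) \<le> \<epsilon> * \<eta> + 8/5 * (\<epsilon> * \<eta>)"
    using H_0 norm_triangle_sub[of "H (v, G v)" "H 0"] by simp
  moreover have "\<epsilon> * \<eta> \<le> 1/10 * \<eta>"
    using \<epsilon> \<eta> by (intro mult_right_mono) auto
  ultimately show "norm (H (v, G v)) \<le> 3/10 * \<eta>"
    using \<eta> by linarith
qed

lemma maps_small_ball:
  assumes "v \<in> cball 0 \<eta>"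
  shows "\<Phi> v \<in> cball 0 q" "T v \<in> cball 0 \<eta>"
proof -
  have "norm (\<Phi> v) \<le> norm (G v) + norm (H (v, G v))"
    unfolding \<Phi>_def by (rule order_trans[OF norm_triangle_ineq add_mono[OF norm_D2 norm_snd_le_norm]])
  then have \<Phi>_small: "norm (\<Phi> v) \<le> 9/10 * \<eta>"
    using norm_graph_small[OF assms] by linarith
  then show \<Phi>_in: "\<Phi> v \<in> cball 0 q"
    using \<eta> by simp
  have "norm (J (\<Phi> v) - J 0) \<le> 1/2 * norm (\<Phi> v)"
    using J_lipschitz[OF \<Phi>_in, of 0] \<eta> by simp
  then have "norm (J (\<Phi> v)) \<le> \<eta> / 100 + 9/20 * \<eta>"
    using J_0 \<Phi>_small norm_triangle_sub[of "J (\<Phi> v)" "J 0"] by linarith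
  moreover have "norm (T v) \<le> norm (J (\<Phi> v)) + norm (H (v, G v))"
    unfolding T_def
    by (rule order_trans[OF norm_D1i order_trans[OF norm_triangle_ineq4 add_left_mono[OF norm_fst_le_norm]]])
  ultimately show "T v \<in> cball 0 \<eta>"
    using norm_graph_small(2)[OF assms] \<eta> by simp
qed

lemma T_has_fixed_point: "\<exists>v \<in> cball 0 \<eta>. T v = v"
proof -
  have "\<exists>!v \<in> cball 0 \<eta>. T v = v"
  proof (rule Banach_fix[of _ "1/2"])
    show "complete (cball (0::'a) \<eta>)" "cball (0::'a) \<eta> \<noteq> {}"
      using \<eta> by (auto simp: complete_eq_closed)
    show "T ` cball 0 \<eta> \<subseteq> cball 0 \<eta>"
      using maps_small_ball by blast
    show "dist (T x) (T y) \<le> 1/2 * dist x y" if "x \<in> cball 0 \<eta>" "y \<in> cball 0 \<eta>" for x y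
      using T_contraction that maps_small_ball(1)[OF that(1)] maps_small_ball(1)[OF that(2)] \<eta>
      by (simp add: dist_norm)
  qed auto
  then show ?thesis
    by blast
qed

theorem diagF_graph_inter_graph_singleton:
  "\<exists>z. diagF D1 D2 H ` {(v, G v) | v. v \<in> cball 0 p} \<inter> {(J w, w) | w. w \<in> cball 0 q} = {z}"
proof -
  obtain v0 where v0: "v0 \<in> cball 0 \<eta>" "T v0 = v0"
    using T_has_fixed_point by blast
  have v0_p: "v0 \<in> cball 0 p" and \<Phi>v0_q: "\<Phi> v0 \<in> cball 0 q"
    using v0(1) \<eta> maps_small_ball(1) by auto
  have unique: "v = v0" if "v \<in> cball 0 p" "\<Phi> v \<in> cball 0 q" "T v = v" for v
    using T_contraction[OF that(1) v0_p that(2) \<Phi>v0_q] that(3) v0(2) by simp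
  show ?thesis
  proof (intro exI equalityI subsetI)
    fix z assume "z \<in> {diagF D1 D2 H (v0, G v0)}"
    then show "z \<in> diagF D1 D2 H ` {(v, G v) | v. v \<in> cball 0 p} \<inter> {(J w, w) | w. w \<in> cball 0 q}"
      using diagF_graph_eq_iff[of v0 "\<Phi> v0"] v0 v0_p \<Phi>v0_q by fastforce
  next
    fix z assume "z \<in> diagF D1 D2 H ` {(v, G v) | v. v \<in> cball 0 p} \<inter> {(J w, w) | w. w \<in> cball 0 q}"
    then obtain v w where v: "v \<in> cball 0 p" and w: "w \<in> cball 0 q"
      and z: "z = diagF D1 D2 H (v, G v)" and on_graph: "diagF D1 D2 H (v, G v) = (J w, w)"
      by auto
    from on_graph have "w = \<Phi> v" "T v = v"
      by (simp_all add: diagF_graph_eq_iff)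
    then have "v = v0"
      using unique v w by simp
    then show "z \<in> {diagF D1 D2 H (v0, G v0)}"
      using z by simp
  qed
qed

end

lemma diagF_Mu_inter_Ms_singleton:
  fixes D1 :: "'a::euclidean_space \<Rightarrow>\<^sub>L 'a" and D2 :: "'b::euclidean_space \<Rightarrow>\<^sub>L 'b"
  assumes "0 \<le> \<delta>" "0 \<le> chi" "0 < \<epsilon>" "\<epsilon> \<le> 1/10" "r powr \<delta> \<le> 1"
    and "0 < \<eta>" "\<eta> \<le> p" "2 * p \<le> r"
    and "exp (- \<epsilon>) \<le> \<eta>' / \<eta>" "\<eta>' / \<eta> \<le> exp \<epsilon>" "\<eta>' \<le> q'"
    and "GT2 chi D1 D2" "GT3 \<delta> \<epsilon> r \<eta> p H"
    and "Vu \<in> Mu \<delta> p \<eta>" "Vs \<in> Ms \<delta> q' \<eta>'"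
  shows "\<exists>z. diagF D1 D2 H ` Vu \<inter> Vs = {z}"
proof -
  obtain G :: "'a \<Rightarrow> 'b" where G: "admissible \<delta> p \<eta> G" and Vu: "Vu = {(v, G v) | v. v \<in> cball 0 p}"
    using assms(14) unfolding Mu_def by blast
  obtain J :: "'b \<Rightarrow> 'a" where J: "admissible \<delta> q' \<eta>' J" and Vs: "Vs = {(J w, w) | w. w \<in> cball 0 q'}"
    using assms(15) unfolding Ms_def by blast
  obtain D1i :: "'a \<Rightarrow>\<^sub>L 'a" where D1i: "\<And>x. D1i (D1 x) = x" "\<And>x. D1 (D1i x) = x"
    "\<And>x. norm (D1i x) \<le> norm x" "\<And>y. norm (D2 y) \<le> norm y"
    using GT2_inverse_contractions[OF assms(12,2)] by blast
  have "\<epsilon> * \<eta> \<le> 1/10 * \<eta>"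
    using assms(4,6) by (intro mult_right_mono) auto
  moreover have "(1 - \<epsilon>) * \<eta> \<le> exp (- \<epsilon>) * \<eta>"
    using exp_ge_add_one_self[of "- \<epsilon>"] assms(6) by (intro mult_right_mono) auto
  moreover have "exp (- \<epsilon>) * \<eta> \<le> \<eta>'"
    using assms(6,9) by (simp add: pos_le_divide_eq)
  ultimately have \<eta>'_lower: "9/10 * \<eta> \<le> \<eta>'"
    by (simp add: left_diff_distrib)
  have "exp \<epsilon> \<le> 3"
    using assms(4) exp_le order.trans[of "exp \<epsilon>" "exp 1" 3] by simp
  have "\<eta>' \<le> exp \<epsilon> * \<eta>"
    using assms(6,10) by (simp add: pos_divide_le_eq)
  also have "\<dots> \<le> 3 * \<eta>"
    using \<open>exp \<epsilon> \<le> 3\<close> assms(6) by (intro mult_right_mono) auto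
  finally have J_0: "norm (J 0) \<le> \<eta> / 100"
    using admissible_norm_at_0[OF J] assms(6) by linarith
  interpret graph_transversality D1 D1i D2 H G J \<epsilon> \<eta> p q'
    using D1i admissible_norm_at_0[OF G] admissible_lipschitz[OF G assms(1)]
      admissible_lipschitz[OF J assms(1)] J_0 GT3_norm_at_0[OF assms(13)]
      GT3_lipschitz[OF assms(13) assms(1) assms(6-8) assms(5)] assms(3,4,6,7,11) \<eta>'_lower
    by unfold_locales auto
  show ?thesis
    unfolding Vu Vs by (rule diagF_graph_inter_graph_singleton)
qed

theorem lemmaA4:
  fixes \<delta> chi :: real
  assumes "0 < \<delta>" "\<delta> < 1" "0 < chi"
  shows "\<exists>\<epsilon>0>0. \<forall>\<epsilon>. 0 < \<epsilon> \<and> \<epsilon> < \<epsilon>0 \<longrightarrow>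
    (\<forall>r \<eta> p \<eta>' p' q' (D1::'a::euclidean_space \<Rightarrow>\<^sub>L 'a) (D2::'b::euclidean_space \<Rightarrow>\<^sub>L 'b) H.
       0 < r \<and> 2 * r powr \<delta> < \<epsilon> \<and>
       0 < \<eta> \<and> \<eta> \<le> p \<and> p \<le> r / 2 \<and>
       0 < \<eta>' \<and> \<eta>' \<le> p' \<and> p' \<le> exp \<epsilon> * p \<and>
       exp (-\<epsilon>) \<le> \<eta>' / \<eta> \<and> \<eta>' / \<eta> \<le> exp \<epsilon> \<and>
       \<eta>' \<le> q' \<and> q' \<le> r / 2 \<and>
       GT2 chi D1 D2 \<and> GT3 \<delta> \<epsilon> r \<eta> p H
     \<longrightarrow> (\<forall>Vu \<in> Mu \<delta> p \<eta>. \<forall>Vs \<in> Ms \<delta> q' \<eta>'.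
            \<exists>z. diagF D1 D2 H ` Vu \<inter> Vs = {z}))"
  apply (intro exI[of _ "1/10::real"] conjI allI impI ballI)
   apply simp
  subgoal for \<epsilon> r \<eta> p \<eta>' p' q' D1 D2 H Vu Vs
    using assms by (intro diagF_Mu_inter_Ms_singleton[of \<delta> chi \<epsilon> r \<eta> p \<eta>' q']) auto
  done

end
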